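(* Let $F$ be a field of finite characteristic $p$ and let $n \in \mathbb{N}$ with $p \nmid n$. Then the polynomial $x^n + y^n + x^n y^n$ is irreducible in the polynomial ring $F[x,y]$. *)

theory Defs
  imports "HOL-Computational_Algebra.Polynomial_Factorial"
begin

text \<open>F[x,y] is rendered as (F[x])[y], i.e. the type 'a poly poly.
  The inner variable is x, the outer variable is y.\<close>

definition varX :: "'a::comm_semiring_1 poly poly" where
  "varX = [:[:0, 1:]:]"

definition varY :: "'a::comm_semiring_1 poly poly" where
  "varY = [:0, 1:]"

end

theory Submission
  imports Defs "HOL-Computational_Algebra.Squarefree"
begin

text \<open>View \<open>f = x\<^sup>n + (1 + x\<^sup>n) y\<^sup>n\<close> as a polynomial in \<open>y\<close> over \<open>F[x]\<close> and take a prime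
  factor \<open>q\<close> of \<open>1 + x\<^sup>n\<close>. Then \<open>q\<close> divides every coefficient of \<open>f\<close> except the constant one
  \<open>x\<^sup>n\<close>, and since \<open>p \<nmid> n\<close> the polynomial \<open>1 + x\<^sup>n\<close> is separable, so \<open>q\<^sup>2\<close> does not divide
  the leading coefficient. This is Eisenstein's criterion for the reflected polynomial
  \<open>y\<^sup>n f(1/y)\<close>: in a factorisation \<open>f = g h\<close> into factors of positive degree, \<open>q\<close> would
  divide the leading coefficients of both \<open>g\<close> and \<open>h\<close>. Factors of degree zero are units
  because \<open>x\<^sup>n\<close> and \<open>1 + x\<^sup>n\<close> are coprime.\<close>

lemma prime_elem_not_dvd_coeff_mult:
  fixes g h :: "'a::idom poly"
  assumes q: "prime_elem q"
    and ga: "\<not> q dvd coeff g a" and g_above: "\<And>i. i > a \<Longrightarrow> q dvd coeff g i"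
    and hb: "\<not> q dvd coeff h b" and h_above: "\<And>j. j > b \<Longrightarrow> q dvd coeff h j"
  shows "\<not> q dvd coeff (g * h) (a + b)"
proof
  assume dvd_coeff: "q dvd coeff (g * h) (a + b)"
  let ?rest = "\<Sum>i\<in>{..a + b} - {a}. coeff g i * coeff h (a + b - i)"
  have "coeff (g * h) (a + b) = coeff g a * coeff h b + ?rest"
    unfolding coeff_mult by (subst sum.remove[of _ a]) auto
  moreover have "q dvd ?rest"
  proof (rule dvd_sum)
    fix i assume "i \<in> {..a + b} - {a}"
    then have "i > a \<or> a + b - i > b" by auto
    then show "q dvd coeff g i * coeff h (a + b - i)"
      using g_above h_above by (meson dvd_mult dvd_mult2)
  qed
  ultimately have "q dvd coeff g a * coeff h b"
    using dvd_coeff by (simp add: dvd_add_left_iff)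
  then show False
    using q ga hb by (simp add: prime_elem_dvd_mult_iff)
qed

lemma prime_elem_dvd_coeff_of_dvd:
  fixes f g :: "'a::idom poly"
  assumes q: "prime_elem q"
    and f_coeffs: "\<And>i. i > 0 \<Longrightarrow> q dvd coeff f i" and f0: "\<not> q dvd coeff f 0"
    and "g dvd f" and "i > 0"
  shows "q dvd coeff g i"
proof (rule ccontr)
  assume g_i: "\<not> q dvd coeff g i"
  have last_nondvd: "\<exists>m \<ge> k. \<not> q dvd coeff p m \<and> (\<forall>j > m. q dvd coeff p j)"
    if "\<not> q dvd coeff p k" for p :: "'a poly" and k
  proof -
    let ?S = "{j. \<not> q dvd coeff p j}"
    have fin: "finite ?S"
      by (rule finite_subset[of _ "{..degree p}"]) (auto intro: le_degree)
    have "Max ?S \<ge> k" "\<not> q dvd coeff p (Max ?S)"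
      using Max_ge[OF fin] Max_in[OF fin] that by auto
    moreover have "q dvd coeff p j" if "j > Max ?S" for j
      using Max_ge[OF fin, of j] that by auto
    ultimately show ?thesis by blast
  qed
  obtain h where f: "f = g * h" using \<open>g dvd f\<close> by (elim dvdE)
  have "\<not> q dvd coeff h 0"
    using f0 by (auto simp: f coeff_mult)
  then obtain b where "\<not> q dvd coeff h b" "\<And>j. j > b \<Longrightarrow> q dvd coeff h j"
    using last_nondvd by blast
  moreover from g_i obtain a where "a \<ge> i" "\<not> q dvd coeff g a" "\<And>j. j > a \<Longrightarrow> q dvd coeff g j"
    using last_nondvd by blast
  ultimately have "\<not> q dvd coeff f (a + b)"
    unfolding f by (intro prime_elem_not_dvd_coeff_mult[OF q])
  with f_coeffs \<open>a \<ge> i\<close> \<open>i > 0\<close> show False by simp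
qed

lemma irreducible_reflected_Eisenstein:
  fixes f :: "'a::idom poly"
  assumes q: "prime_elem q" and "degree f > 0"
    and primitive: "\<And>c. [:c:] dvd f \<Longrightarrow> c dvd 1"
    and f_coeffs: "\<And>i. i > 0 \<Longrightarrow> q dvd coeff f i" and f0: "\<not> q dvd coeff f 0"
    and lead: "\<not> q\<^sup>2 dvd lead_coeff f"
  shows "irreducible f"
proof (rule irreducibleI)
  show "f \<noteq> 0" "\<not> f dvd 1"
    using \<open>degree f > 0\<close> by (auto simp: is_unit_poly_iff)
  have constant_factor_unit: "g dvd 1" if "g dvd f" "degree g = 0" for g
    using that primitive by (auto simp: is_unit_poly_iff elim: degree_eq_zeroE)
  fix g h assume f: "f = g * h"
  show "g dvd 1 \<or> h dvd 1"
  proof (rule ccontr)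
    assume "\<not> (g dvd 1 \<or> h dvd 1)"
    then have "degree g > 0" "degree h > 0"
      using constant_factor_unit[of g] constant_factor_unit[of h] f by auto
    then have "q dvd lead_coeff g" "q dvd lead_coeff h"
      using prime_elem_dvd_coeff_of_dvd[OF q f_coeffs f0] f by auto
    then have "q\<^sup>2 dvd lead_coeff g * lead_coeff h"
      by (simp add: power2_eq_square mult_dvd_mono)
    with lead show False by (simp add: f lead_coeff_mult)
  qed
qed

lemma irreducible_const_plus_monom:
  fixes a b :: "'a::{idom, algebraic_semidom}"
  assumes "n > 0" and q: "prime_elem q" and "q dvd b" "\<not> q dvd a" "\<not> q\<^sup>2 dvd b"
    and "coprime a b"
  shows "irreducible ([:a:] + monom b n)"
proof (rule irreducible_reflected_Eisenstein[OF q])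
  let ?f = "[:a:] + monom b n"
  have "b \<noteq> 0" using \<open>\<not> q\<^sup>2 dvd b\<close> by auto
  then have degree: "degree ?f = n"
    using \<open>n > 0\<close> by (simp add: degree_add_eq_right degree_monom_eq)
  have coeff: "coeff ?f i = (if i = 0 then a else if i = n then b else 0)" for i
    using \<open>n > 0\<close> by (simp add: coeff_pCons split: nat.split)
  show "degree ?f > 0" using degree \<open>n > 0\<close> by simp
  show "c dvd 1" if "[:c:] dvd ?f" for c
  proof -
    have "c dvd coeff ?f 0" "c dvd coeff ?f n"
      using that by (simp_all only: const_poly_dvd_iff)
    then have "c dvd a" "c dvd b"
      unfolding coeff using \<open>n > 0\<close> by simp_all
    with \<open>coprime a b\<close> show ?thesis by (rule coprime_common_divisor)
  qed
  show "q dvd coeff ?f i" if "i > 0" for i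
    unfolding coeff using that \<open>q dvd b\<close> by simp
  show "\<not> q dvd coeff ?f 0" "\<not> q\<^sup>2 dvd lead_coeff ?f"
    unfolding coeff degree using \<open>n > 0\<close> \<open>\<not> q dvd a\<close> \<open>\<not> q\<^sup>2 dvd b\<close> by simp_all
qed

lemma dvd_pderiv_if_square_dvd:
  fixes d p :: "'a::{comm_semiring_1, semiring_no_zero_divisors} poly"
  assumes "d\<^sup>2 dvd p"
  shows "d dvd pderiv p"
proof -
  obtain r where "p = d\<^sup>2 * r" using assms by (elim dvdE)
  then have "p = d * (d * r)" by (simp add: power2_eq_square mult.assoc)
  then show ?thesis by (auto simp: pderiv_mult intro!: dvd_add)
qed

lemma squarefree_monom_plus_one:
  assumes "of_nat n \<noteq> (0::'a::field)"
  shows "squarefree (monom (1::'a) n + 1)"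
proof (rule squarefreeI)
  fix d :: "'a poly" assume square_dvd: "d\<^sup>2 dvd monom 1 n + 1"
  have "n > 0" using assms by (auto intro: Nat.gr0I)
  have "d dvd pderiv (monom 1 n + 1)"
    using square_dvd by (rule dvd_pderiv_if_square_dvd)
  also have "pderiv (monom 1 n + 1) = smult (of_nat n) (monom 1 (n - 1))"
    by (simp add: pderiv_add pderiv_monom smult_monom)
  finally have "d dvd monom 1 (n - 1)"
    using assms by (elim dvd_smult_cancel)
  then have "d dvd monom 1 1 * monom 1 (n - 1)" by simp
  then have "d dvd monom 1 n"
    using \<open>n > 0\<close> by (simp add: mult_monom)
  moreover have "d dvd monom 1 n + 1"
    using square_dvd by (rule dvd_trans[rotated]) (simp add: power2_eq_square)
  ultimately show "d dvd 1"
    by (simp add: dvd_add_right_iff)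
qed

lemma varX_varY_binomial:
  "(varX :: 'a::comm_semiring_1 poly poly) ^ n + varY ^ n + varX ^ n * varY ^ n
    = [:monom 1 n:] + monom (monom 1 n + 1) n"
proof -
  have "(varX :: 'a poly poly) ^ n = [:monom 1 n:]"
    by (simp add: varX_def poly_const_pow monom_altdef)
  moreover have "(varY :: 'a poly poly) ^ n = monom 1 n"
    by (simp add: varY_def monom_altdef)
  ultimately show ?thesis
    by (simp add: smult_monom ac_simps flip: add_monom)
qed

lemma field_poly_prime_elem_divisor_exists:
  fixes p :: "'a::field poly"
  assumes "degree p > 0"
  shows "\<exists>q. prime_elem q \<and> q dvd p"
  using assms
proof (induction "degree p" arbitrary: p rule: less_induct)
  case less
  show ?case
  proof (cases "irreducible p")
    case True
    then have "prime_elem p" by (rule field_poly_irreducible_imp_prime)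
    then show ?thesis by auto
  next
    case False
    have "p \<noteq> 0" using less.prems by auto
    then have "\<not> p dvd 1" using less.prems by (simp add: is_unit_iff_degree)
    with False \<open>p \<noteq> 0\<close> obtain a b where p: "p = a * b" and "\<not> a dvd 1" "\<not> b dvd 1"
      by (auto simp: irreducible_def)
    moreover have "a \<noteq> 0" "b \<noteq> 0" using p \<open>p \<noteq> 0\<close> by auto
    ultimately have "degree a > 0" "degree b > 0"
      by (auto simp: is_unit_iff_degree)
    with p \<open>a \<noteq> 0\<close> \<open>b \<noteq> 0\<close> have "degree a < degree p"
      by (simp add: degree_mult_eq)
    with \<open>degree a > 0\<close> obtain q where "prime_elem q" "q dvd a"
      using less.hyps by blast
    then show ?thesis using p by auto
  qed
qed

theorem lemma4p1:
  fixes n :: nat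
  assumes "CHAR('a::field) > 0"
    and "\<not> CHAR('a) dvd n"
  shows "irreducible ((varX :: 'a poly poly) ^ n + varY ^ n + varX ^ n * varY ^ n)"
proof -
  have n: "of_nat n \<noteq> (0::'a)"
    using assms(2) by (simp add: of_nat_eq_0_iff_char_dvd)
  then have "n > 0" by (auto intro: Nat.gr0I)
  let ?P = "monom (1::'a) n + 1"
  have "degree ?P > 0"
    using \<open>n > 0\<close> by (simp add: degree_add_eq_left degree_monom_eq)
  then obtain q where "prime_elem q" "q dvd ?P"
    using field_poly_prime_elem_divisor_exists by blast
  moreover have "\<not> q dvd monom 1 n"
    using \<open>q dvd ?P\<close> \<open>prime_elem q\<close> by (auto simp: dvd_add_right_iff)
  moreover have "\<not> q\<^sup>2 dvd ?P"
    using squarefree_monom_plus_one[OF n] \<open>prime_elem q\<close> by (auto dest: squarefreeD)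
  moreover have "coprime (monom 1 n) ?P"
  proof (rule coprimeI)
    fix c assume "c dvd monom 1 n" "c dvd ?P"
    then show "c dvd 1" by (simp only: dvd_add_right_iff)
  qed
  ultimately show ?thesis
    unfolding varX_varY_binomial by (intro irreducible_const_plus_monom \<open>n > 0\<close>) simp_all
qed

end
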